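(* Let $(\Omega,\Sigma,\mu)$ be any measure space and $1<p<\infty$. Let $(f_n)$ be a pairwise disjoint sequence in the unit ball of $L^{p,\infty}(\Omega,\Sigma,\mu)$ (with respect to the quasi-norm below), and let $(M_n)$ be a real sequence with $1<M_n\le 2^{-1/p}M_{n+1}$ for all $n\in\mathbb N$. Define $g_1=(f_1)_{M_1}$ and $g_{n+1}=(f_{n+1})_{M_{n+1}}-(f_{n+1})_{M_n}$ for $n\ge1$. Then $\sup_k\big\|\sum_{n=1}^k g_n\big\|\le 4$.
   Context: $L^{p,\infty}(\Omega,\Sigma,\mu)$ is the space of (equivalence classes of) measurable $f$ with $\|f\|=\sup_{c>0}c\,(\mu\{|f|>c\})^{1/p}<\infty$; $\|\cdot\|$ denotes this quasi-norm. For a real-valued function $f$ and $1<M<\infty$, $(f)_M=f\chi_{\{M^{-1}<|f|<M\}}$. Functions $f,g$ are disjoint if $|f|\wedge|g|=0$. *)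

theory Defs
  imports "HOL-Analysis.Analysis"
begin

definition enn_root :: "real \<Rightarrow> ennreal \<Rightarrow> ennreal" where
  "enn_root p a = (if a = \<infinity> then \<infinity> else ennreal ((enn2real a) powr (1 / p)))"

definition weak_Lp_norm :: "'a measure \<Rightarrow> real \<Rightarrow> ('a \<Rightarrow> real) \<Rightarrow> ennreal" where
  "weak_Lp_norm M p f =
     (SUP c\<in>{0<..}. ennreal c * enn_root p (emeasure M {x\<in>space M. \<bar>f x\<bar> > c}))"

definition trunc_fn :: "('a \<Rightarrow> real) \<Rightarrow> real \<Rightarrow> 'a \<Rightarrow> real" where
  "trunc_fn f K x = (if inverse K < \<bar>f x\<bar> \<and> \<bar>f x\<bar> < K then f x else 0)"

end

(*
  Fix a level c > 0. By disjointness, {|g_1 + ... + g_k| > c} is a.e. contained in the union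
  of the sets {|g_n| > c}. Where g_n is nonzero it equals f_n, with 1/K_n < |f_n| < K_n but
  |f_n| outside (1/K_(n-1), K_(n-1)). The weak-type bound mu{|f_n| > t} <= t^-p therefore gives
  mu{|g_n| > c} <= min (c^-p) (K_n^p); this measure vanishes once K_n <= c and is at most
  K_(n-1)^-p once 1/K_(n-1) <= c. Since K_n^p at least doubles with n, these bounds add up to at
  most 4 c^-p, so the weak quasi-norm of the partial sum is at most 4^(1/p) <= 4.
*)

theory Submission
  imports Defs
begin

lemma powr_le_powr_iff:
  fixes x y p :: real
  assumes "0 < p" "0 \<le> x" "0 \<le> y"
  shows "x powr p \<le> y powr p \<longleftrightarrow> x \<le> y"
  using assms by (meson not_le powr_less_mono2 powr_mono2 less_imp_le)

lemma two_mult_powr_le: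
  fixes x z p :: real
  assumes p: "0 < p" and x: "0 \<le> x" and xz: "x \<le> 2 powr (- 1 / p) * z"
  shows "2 * x powr p \<le> z powr p"
proof -
  have z: "0 \<le> z"
    using x xz by (smt (verit) powr_gt_zero zero_le_mult_iff)
  have "x powr p \<le> (2 powr (- 1 / p) * z) powr p"
    using p x xz by (intro powr_mono2) auto
  also have "\<dots> = (2 powr (- 1 / p)) powr p * z powr p"
    by (rule powr_mult)
  also have "(2 powr (- 1 / p)) powr p = 1 / 2"
    using p by (simp only: powr_powr) (simp add: powr_minus_divide)
  finally show ?thesis
    by simp
qed

lemma ennreal_mult_enn_root_le_iff:
  assumes "0 < t" "0 < p" "0 \<le> C"
  shows "ennreal t * enn_root p E \<le> ennreal C \<longleftrightarrow> E \<le> ennreal ((C / t) powr p)"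
proof (cases E rule: ennreal_cases)
  case (real r)
  have "t * r powr (1 / p) \<le> C \<longleftrightarrow> r powr (1 / p) \<le> C / t"
    using assms by (simp add: pos_le_divide_eq mult.commute)
  also have "\<dots> \<longleftrightarrow> (r powr (1 / p)) powr p \<le> (C / t) powr p"
    using assms by (simp add: powr_le_powr_iff)
  also have "(r powr (1 / p)) powr p = r"
    using assms real by (simp add: powr_powr)
  finally show ?thesis
    using assms real by (simp add: enn_root_def ennreal_mult[symmetric])
qed (use assms in \<open>simp add: enn_root_def ennreal_top_mult_left top_unique\<close>)

lemma weak_Lp_norm_le_iff:
  assumes "0 < p" "0 \<le> C"
  shows "weak_Lp_norm M p f \<le> ennreal C \<longleftrightarrow>
    (\<forall>t>0. emeasure M {x\<in>space M. t < \<bar>f x\<bar>} \<le> ennreal ((C / t) powr p))"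
  using assms by (simp add: weak_Lp_norm_def SUP_le_iff ennreal_mult_enn_root_le_iff Ball_def)

lemma weak_Lp_norm_le_powr_of_emeasure_le:
  assumes p: "0 < p" and C: "0 \<le> C"
    and level: "\<And>t. 0 < t \<Longrightarrow> emeasure M {x\<in>space M. t < \<bar>f x\<bar>} \<le> ennreal (C * (1 / t) powr p)"
  shows "weak_Lp_norm M p f \<le> ennreal (C powr (1 / p))"
proof -
  have "(C powr (1 / p) / t) powr p = C * (1 / t) powr p" if "0 < t" for t
    using p C that by (simp add: powr_divide powr_powr)
  then show ?thesis
    using level p C by (simp add: weak_Lp_norm_le_iff)
qed

lemma weak_Lp_emeasure_ge_le:
  assumes f: "weak_Lp_norm M p f \<le> ennreal C" and [measurable]: "f \<in> borel_measurable M"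
    and p: "0 < p" and C: "0 \<le> C" and t: "0 < t"
  shows "emeasure M {x\<in>space M. t \<le> \<bar>f x\<bar>} \<le> ennreal ((C / t) powr p)"
proof (rule tendsto_lowerbound)
  show "((\<lambda>s. ennreal ((C / s) powr p)) \<longlongrightarrow> ennreal ((C / t) powr p)) (at_left t)"
    using p t C by (intro tendsto_ennrealI tendsto_powr2 tendsto_intros) auto
  show "\<forall>\<^sub>F s in at_left t. emeasure M {x\<in>space M. t \<le> \<bar>f x\<bar>} \<le> ennreal ((C / s) powr p)"
    using eventually_at_left_real[OF t]
  proof eventually_elim
    case (elim s)
    then have "emeasure M {x\<in>space M. t \<le> \<bar>f x\<bar>} \<le> emeasure M {x\<in>space M. s < \<bar>f x\<bar>}"
      by (intro emeasure_mono) auto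
    also have "\<dots> \<le> ennreal ((C / s) powr p)"
      using f elim weak_Lp_norm_le_iff[OF p C] by auto
    finally show ?case .
  qed
qed simp

lemma trunc_fn_measurable [measurable]:
  assumes [measurable]: "f \<in> borel_measurable M"
  shows "trunc_fn f K \<in> borel_measurable M"
  unfolding trunc_fn_def by measurable

lemma trunc_fn_one: "trunc_fn f 1 = (\<lambda>x. 0)"
  by (auto simp: trunc_fn_def fun_eq_iff)

lemma trunc_fn_diff:
  assumes "0 < K" "K \<le> K'"
  shows "trunc_fn f K' x - trunc_fn f K x =
    (if inverse K' < \<bar>f x\<bar> \<and> \<bar>f x\<bar> < K' \<and> \<not> (inverse K < \<bar>f x\<bar> \<and> \<bar>f x\<bar> < K)
     then f x else 0)"
proof -
  have "inverse K' \<le> inverse K"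
    using assms by (simp add: le_imp_inverse_le)
  then show ?thesis
    unfolding trunc_fn_def using assms by (smt (verit))
qed

lemma abs_trunc_fn_diff_le:
  assumes "0 < K" "K \<le> K'"
  shows "\<bar>trunc_fn f K' x - trunc_fn f K x\<bar> \<le> \<bar>f x\<bar>"
  using trunc_fn_diff[OF assms, of f x] by simp

lemma emeasure_trunc_fn_diff_gt_bounds:
  fixes M :: "'a measure" and f :: "'a \<Rightarrow> real" and c K K' p :: real
  defines "E \<equiv> emeasure M {x\<in>space M. c < \<bar>trunc_fn f K' x - trunc_fn f K x\<bar>}"
  assumes f: "weak_Lp_norm M p f \<le> 1" and [measurable]: "f \<in> borel_measurable M"
    and p: "0 < p" and c: "0 < c" and K: "0 < K" "K \<le> K'"
  shows "E \<le> ennreal ((1 / c) powr p)"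
    and "E \<le> ennreal (K' powr p)"
    and "K' \<le> c \<Longrightarrow> E = 0"
    and "inverse K \<le> c \<Longrightarrow> E \<le> ennreal ((1 / K) powr p)"
proof -
  have f1: "weak_Lp_norm M p f \<le> ennreal 1"
    using f by simp
  have weak: "emeasure M {x\<in>space M. t < \<bar>f x\<bar>} \<le> ennreal ((1 / t) powr p)" if "0 < t" for t
    using f1 that unfolding weak_Lp_norm_le_iff[OF p zero_le_one] by blast
  have E_le: "E \<le> emeasure M S"
    if "\<And>x. c < \<bar>f x\<bar> \<Longrightarrow> inverse K' < \<bar>f x\<bar> \<Longrightarrow> \<bar>f x\<bar> < K' \<Longrightarrow>
          \<not> (inverse K < \<bar>f x\<bar> \<and> \<bar>f x\<bar> < K) \<Longrightarrow> x \<in> space M \<Longrightarrow> x \<in> S"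
    and "S \<in> sets M" for S
    unfolding E_def using c that by (intro emeasure_mono) (auto simp: trunc_fn_diff[OF K] split: if_splits)
  show "E \<le> ennreal ((1 / c) powr p)"
    using E_le[of "{x\<in>space M. c < \<bar>f x\<bar>}"] weak[OF c] by fastforce
  show "E \<le> ennreal (K' powr p)"
    using E_le[of "{x\<in>space M. inverse K' < \<bar>f x\<bar>}"] weak[of "inverse K'"] K
    by (fastforce simp: divide_inverse)
  show "E = 0" if "K' \<le> c"
    using E_le[of "{}"] that by fastforce
  show "E \<le> ennreal ((1 / K) powr p)" if "inverse K \<le> c"
  proof -
    have "E \<le> emeasure M {x\<in>space M. K \<le> \<bar>f x\<bar>}"
      using that by (intro E_le) auto
    also have "\<dots> \<le> ennreal ((1 / K) powr p)"
      using f1 p K by (intro weak_Lp_emeasure_ge_le) auto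
    finally show ?thesis .
  qed
qed

lemma abs_sum_gt_imp_ex_abs_gt:
  fixes u :: "'i \<Rightarrow> real"
  assumes I: "finite I" and c: "0 \<le> c" "c < \<bar>\<Sum>i\<in>I. u i\<bar>"
    and disj: "\<And>i j. i \<in> I \<Longrightarrow> j \<in> I \<Longrightarrow> i \<noteq> j \<Longrightarrow> min \<bar>u i\<bar> \<bar>u j\<bar> = 0"
  shows "\<exists>i\<in>I. c < \<bar>u i\<bar>"
proof -
  have "(\<Sum>i\<in>I. u i) \<noteq> 0"
    using c by linarith
  then obtain j where j: "j \<in> I" "u j \<noteq> 0"
    by (meson sum.neutral)
  have "u i = 0" if "i \<in> I - {j}" for i
    using disj[of i j] that j by (auto simp: min_def split: if_splits)
  then have "(\<Sum>i\<in>I. u i) = u j"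
    using I j(1) by (simp add: sum.remove)
  then show ?thesis
    using c j(1) by auto
qed

lemma emeasure_abs_sum_gt_le_sum:
  fixes h :: "'i \<Rightarrow> 'a \<Rightarrow> real"
  assumes I: "finite I" and c: "0 \<le> c"
    and meas: "\<And>i. i \<in> I \<Longrightarrow> h i \<in> borel_measurable M"
    and disj: "\<And>i j. i \<in> I \<Longrightarrow> j \<in> I \<Longrightarrow> i \<noteq> j \<Longrightarrow> AE x in M. min \<bar>h i x\<bar> \<bar>h j x\<bar> = 0"
  shows "emeasure M {x\<in>space M. c < \<bar>\<Sum>i\<in>I. h i x\<bar>}
    \<le> (\<Sum>i\<in>I. emeasure M {x\<in>space M. c < \<bar>h i x\<bar>})"
proof -
  let ?A = "\<lambda>i. {x\<in>space M. c < \<bar>h i x\<bar>}"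
  have sets: "?A i \<in> sets M" if "i \<in> I" for i
  proof -
    have [measurable]: "h i \<in> borel_measurable M"
      using meas that .
    show ?thesis
      by measurable
  qed
  have "AE x in M. \<forall>i\<in>I. \<forall>j\<in>I. i \<noteq> j \<longrightarrow> min \<bar>h i x\<bar> \<bar>h j x\<bar> = 0"
    using I by (intro eventually_ball_finite ballI AE_impI disj)
  then have "AE x\<in>{x\<in>space M. c < \<bar>\<Sum>i\<in>I. h i x\<bar>} in M. x \<in> (\<Union>i\<in>I. ?A i)"
  proof eventually_elim
    case (elim x)
    show ?case
    proof
      assume "x \<in> {x\<in>space M. c < \<bar>\<Sum>i\<in>I. h i x\<bar>}"
      then show "x \<in> (\<Union>i\<in>I. ?A i)"
        using abs_sum_gt_imp_ex_abs_gt[OF I c, of "\<lambda>i. h i x"] elim by auto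
    qed
  qed
  then have "emeasure M {x\<in>space M. c < \<bar>\<Sum>i\<in>I. h i x\<bar>} \<le> emeasure M (\<Union>i\<in>I. ?A i)"
    using I sets by (intro emeasure_mono_AE) auto
  also have "\<dots> \<le> (\<Sum>i\<in>I. emeasure M (?A i))"
    using I sets by (intro emeasure_subadditive_finite) auto
  finally show ?thesis .
qed

lemma doubling_scale_sum_le:
  fixes y b :: "nat \<Rightarrow> real" and a :: real
  assumes a: "0 < a"
    and y_gt_1: "\<And>n. 1 \<le> n \<Longrightarrow> 1 < y n"
    and y_double: "\<And>n. 1 \<le> n \<Longrightarrow> 2 * y n \<le> y (Suc n)"
    and b_le_a: "\<And>n. 1 \<le> n \<Longrightarrow> b n \<le> a"
    and b_le_y: "\<And>n. 1 \<le> n \<Longrightarrow> b n \<le> y n"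
    and b_zero: "\<And>n. 1 \<le> n \<Longrightarrow> y n \<le> 1 / a \<Longrightarrow> b n = 0"
    and b_Suc_le: "\<And>n. 1 \<le> n \<Longrightarrow> a \<le> y n \<Longrightarrow> b (Suc n) \<le> 1 / y n"
  shows "(\<Sum>n\<in>{1..k}. b n) \<le> 4 * a"
proof -
  \<comment> \<open>A potential: \<open>\<Sum>n\<in>{1..k}. b n \<le> \<phi> (y k)\<close> is preserved from \<open>k\<close> to \<open>Suc k\<close>.\<close>
  define \<phi> where "\<phi> t = (if t \<le> 1 / a then 0 else if t < a then 2 * t - 1 else 4 * a - 2 / t)" for t
  have b_le_\<phi>: "b n \<le> \<phi> (y n)" if n: "1 \<le> n" for n
  proof -
    have "2 / y n < 2 * a" if "1 / a < y n"
      using a that y_gt_1[OF n] by (simp add: field_simps)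
    then show ?thesis
      using a b_le_a[OF n] b_le_y[OF n] b_zero[OF n] y_gt_1[OF n] by (auto simp: \<phi>_def)
  qed
  have \<phi>_step: "\<phi> (y n) + b (Suc n) \<le> \<phi> (y (Suc n))" if n: "1 \<le> n" for n
  proof -
    have yn: "1 < y n" and y'_gt: "1 < y (Suc n)" and double: "2 * y n \<le> y (Suc n)"
      using y_gt_1[OF n] y_gt_1[of "Suc n"] y_double[OF n] by auto
    have inv': "2 / y (Suc n) \<le> 1 / y n" and inv'_lt: "2 / y (Suc n) < 2"
      using yn y'_gt double by (auto simp: field_simps)
    consider "y n \<le> 1 / a" | "1 / a < y n" "y n < a" | "1 / a < y n" "a \<le> y n"
      by linarith
    then show ?thesis
    proof cases
      case 1
      then show ?thesis
        using b_le_\<phi>[of "Suc n"] b_zero[OF n] by (simp add: \<phi>_def)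
    next
      case 2
      then have "1 < a"
        using a by (smt (verit) le_divide_eq_1_pos)
      then show ?thesis
        using 2 double inv'_lt b_le_a[of "Suc n"] b_le_y[of "Suc n"] by (auto simp: \<phi>_def)
    next
      case 3
      then show ?thesis
        using yn double inv' b_Suc_le[OF n] by (auto simp: \<phi>_def)
    qed
  qed
  have partial: "(\<Sum>n\<in>{1..k}. b n) \<le> \<phi> (y k)" if "1 \<le> k" for k
    using that
  proof (induction k rule: dec_induct)
    case base
    then show ?case
      using b_le_\<phi>[of 1] by simp
  next
    case (step k)
    then show ?case
      using \<phi>_step[of k] by (simp add: sum.cl_ivl_Suc)
  qed
  show ?thesis
  proof (cases "k = 0")
    case False
    then have "\<phi> (y k) \<le> 4 * a"
      using a y_gt_1[of k] by (auto simp: \<phi>_def)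
    moreover have "(\<Sum>n\<in>{1..k}. b n) \<le> \<phi> (y k)"
      using partial False by simp
    ultimately show ?thesis
      by linarith
  qed (use a in simp)
qed

lemma sum_emeasure_trunc_fn_diff_gt_le:
  fixes M :: "'a measure" and f :: "nat \<Rightarrow> 'a \<Rightarrow> real" and K L :: "nat \<Rightarrow> real"
  assumes p: "0 < p" and c: "0 < c"
    and meas: "\<And>n. 1 \<le> n \<Longrightarrow> f n \<in> borel_measurable M"
    and ball: "\<And>n. 1 \<le> n \<Longrightarrow> weak_Lp_norm M p (f n) \<le> 1"
    and K_gt_1: "\<And>n. 1 \<le> n \<Longrightarrow> 1 < K n"
    and K_double: "\<And>n. 1 \<le> n \<Longrightarrow> 2 * K n powr p \<le> K (Suc n) powr p"
    and L: "\<And>n. 1 \<le> n \<Longrightarrow> 0 < L n \<and> L n \<le> K n"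
    and L_Suc: "\<And>n. 1 \<le> n \<Longrightarrow> L (Suc n) = K n"
  shows "(\<Sum>n\<in>{1..k}. emeasure M {x\<in>space M. c < \<bar>trunc_fn (f n) (K n) x - trunc_fn (f n) (L n) x\<bar>})
    \<le> ennreal (4 * (1 / c) powr p)"
proof -
  define E where
    "E n = emeasure M {x\<in>space M. c < \<bar>trunc_fn (f n) (K n) x - trunc_fn (f n) (L n) x\<bar>}" for n
  define a where "a = (1 / c) powr p"
  define y where "y n = K n powr p" for n
  have bounds: "E n \<le> ennreal a" "E n \<le> ennreal (y n)" "K n \<le> c \<Longrightarrow> E n = 0"
    "inverse (L n) \<le> c \<Longrightarrow> E n \<le> ennreal ((1 / L n) powr p)" if n: "1 \<le> n" for n
    unfolding E_def a_def y_def
    using emeasure_trunc_fn_diff_gt_bounds[OF ball meas p c, OF n n] L[OF n] by auto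
  have a: "0 < a"
    using c unfolding a_def by simp
  have E_eq: "E n = ennreal (enn2real (E n))" if n: "1 \<le> n" for n
    using bounds(1)[OF n] by (metis ennreal_enn2real ennreal_less_top order.strict_trans1)
  have sum_le: "(\<Sum>n\<in>{1..k}. enn2real (E n)) \<le> 4 * a"
  proof (rule doubling_scale_sum_le[of a y])
    show "1 < y n" if "1 \<le> n" for n
      using K_gt_1[OF that] p unfolding y_def by (simp add: powr_less_mono2)
    show "2 * y n \<le> y (Suc n)" if "1 \<le> n" for n
      using K_double[OF that] unfolding y_def .
    show "enn2real (E n) \<le> a" if "1 \<le> n" for n
      using bounds(1)[OF that] a by (simp add: enn2real_leI)
    show "enn2real (E n) \<le> y n" if "1 \<le> n" for n
      using bounds(2)[OF that] unfolding y_def by (simp add: enn2real_leI)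
    show "enn2real (E n) = 0" if n: "1 \<le> n" and "y n \<le> 1 / a" for n
    proof -
      have "K n powr p \<le> c powr p"
        using that c unfolding y_def a_def by (simp add: powr_divide)
      then have "K n \<le> c"
        using K_gt_1[OF n] c p by (simp add: powr_le_powr_iff)
      then show ?thesis
        using bounds(3)[OF n] by simp
    qed
    show "enn2real (E (Suc n)) \<le> 1 / y n" if n: "1 \<le> n" and a_le: "a \<le> y n" for n
    proof -
      have "(1 / c) powr p \<le> K n powr p"
        using a_le unfolding y_def a_def .
      then have "inverse (L (Suc n)) \<le> c"
        using K_gt_1[OF n] c p L_Suc[OF n] by (simp add: powr_le_powr_iff field_simps)
      then have "E (Suc n) \<le> ennreal ((1 / K n) powr p)"
        using bounds(4)[of "Suc n"] L_Suc[OF n] by simp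
      then show ?thesis
        using K_gt_1[OF n] unfolding y_def by (simp add: enn2real_leI powr_divide)
    qed
  qed (use a in simp)
  have "(\<Sum>n\<in>{1..k}. E n) = (\<Sum>n\<in>{1..k}. ennreal (enn2real (E n)))"
    using E_eq by (intro sum.cong) auto
  also have "\<dots> = ennreal (\<Sum>n\<in>{1..k}. enn2real (E n))"
    by (rule sum_ennreal) simp
  also have "\<dots> \<le> ennreal (4 * (1 / c) powr p)"
    using sum_le unfolding a_def by (rule ennreal_leI)
  finally show ?thesis
    unfolding E_def .
qed

lemma emeasure_sum_trunc_fn_diff_gt_le:
  fixes M :: "'a measure" and f :: "nat \<Rightarrow> 'a \<Rightarrow> real" and K L :: "nat \<Rightarrow> real"
  assumes p: "0 < p" and c: "0 < c"
    and meas: "\<And>n. 1 \<le> n \<Longrightarrow> f n \<in> borel_measurable M"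
    and ball: "\<And>n. 1 \<le> n \<Longrightarrow> weak_Lp_norm M p (f n) \<le> 1"
    and disj: "\<And>n m. 1 \<le> n \<Longrightarrow> 1 \<le> m \<Longrightarrow> n \<noteq> m \<Longrightarrow> AE x in M. min \<bar>f n x\<bar> \<bar>f m x\<bar> = 0"
    and K_gt_1: "\<And>n. 1 \<le> n \<Longrightarrow> 1 < K n"
    and K_double: "\<And>n. 1 \<le> n \<Longrightarrow> 2 * K n powr p \<le> K (Suc n) powr p"
    and L: "\<And>n. 1 \<le> n \<Longrightarrow> 0 < L n \<and> L n \<le> K n"
    and L_Suc: "\<And>n. 1 \<le> n \<Longrightarrow> L (Suc n) = K n"
  shows "emeasure M {x\<in>space M. c < \<bar>\<Sum>n\<in>{1..k}. trunc_fn (f n) (K n) x - trunc_fn (f n) (L n) x\<bar>}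
    \<le> ennreal (4 * (1 / c) powr p)"
proof -
  have disj_diff: "AE x in M. min \<bar>trunc_fn (f n) (K n) x - trunc_fn (f n) (L n) x\<bar>
      \<bar>trunc_fn (f m) (K m) x - trunc_fn (f m) (L m) x\<bar> = 0"
    if n: "1 \<le> n" and m: "1 \<le> m" and "n \<noteq> m" for n m
    using disj[OF that]
  proof eventually_elim
    case (elim x)
    then show ?case
      using abs_trunc_fn_diff_le[of "L n" "K n" "f n" x] abs_trunc_fn_diff_le[of "L m" "K m" "f m" x]
        L[OF n] L[OF m] by (smt (verit) abs_ge_zero min_def)
  qed
  have "emeasure M {x\<in>space M. c < \<bar>\<Sum>n\<in>{1..k}. trunc_fn (f n) (K n) x - trunc_fn (f n) (L n) x\<bar>}
      \<le> (\<Sum>n\<in>{1..k}. emeasure M {x\<in>space M. c < \<bar>trunc_fn (f n) (K n) x - trunc_fn (f n) (L n) x\<bar>})"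
    using c meas disj_diff by (intro emeasure_abs_sum_gt_le_sum) auto
  also have "\<dots> \<le> ennreal (4 * (1 / c) powr p)"
    by (rule sum_emeasure_trunc_fn_diff_gt_le[OF p c]) (use meas ball K_gt_1 K_double L L_Suc in auto)
  finally show ?thesis .
qed

theorem lemma12:
  fixes M :: "'a measure" and p :: real
    and f g :: "nat \<Rightarrow> 'a \<Rightarrow> real" and K :: "nat \<Rightarrow> real"
  assumes p: "1 < p"
    and meas: "\<And>n. n \<ge> 1 \<Longrightarrow> f n \<in> borel_measurable M"
    and ball: "\<And>n. n \<ge> 1 \<Longrightarrow> weak_Lp_norm M p (f n) \<le> 1"
    and disj: "\<And>n m. n \<ge> 1 \<Longrightarrow> m \<ge> 1 \<Longrightarrow> n \<noteq> m \<Longrightarrow>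
                 AE x in M. min \<bar>f n x\<bar> \<bar>f m x\<bar> = 0"
    and K: "\<And>n. n \<ge> 1 \<Longrightarrow> 1 < K n \<and> K n \<le> 2 powr (- 1 / p) * K (Suc n)"
    and g1: "g 1 = trunc_fn (f 1) (K 1)"
    and gS: "\<And>n. n \<ge> 1 \<Longrightarrow>
               g (Suc n) = (\<lambda>x. trunc_fn (f (Suc n)) (K (Suc n)) x - trunc_fn (f (Suc n)) (K n) x)"
  shows "(SUP k. weak_Lp_norm M p (\<lambda>x. \<Sum>n\<in>{1..k}. g n x)) \<le> 4"
proof -
  have K_gt_1: "1 < K n" if "1 \<le> n" for n
    using K[OF that] by simp
  have K_double: "2 * K n powr p \<le> K (Suc n) powr p" if "1 \<le> n" for n
    using K[OF that] p by (intro two_mult_powr_le) auto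
  \<comment> \<open>As \<open>trunc_fn f 1 = 0\<close>, also \<open>g 1\<close> is a difference of two truncations, with lower level 1.\<close>
  define L where "L n = (if n = 1 then 1 else K (n - 1))" for n
  have K_mono: "K n \<le> K (Suc n)" if "1 \<le> n" for n
  proof -
    have "K n powr p \<le> K (Suc n) powr p"
      using K_double[OF that] powr_ge_zero[of "K n" p] by linarith
    then show ?thesis
      using K_gt_1[OF that] K_gt_1[of "Suc n"] p by (simp add: powr_le_powr_iff)
  qed
  have L: "0 < L n \<and> L n \<le> K n" if "1 \<le> n" for n
  proof (cases n)
    case (Suc m)
    then show ?thesis
      using that K_gt_1[of 1] K_gt_1[of m] K_mono[of m] by (cases "m = 0") (auto simp: L_def)
  qed (use that in simp)
  have g_eq: "g n = (\<lambda>x. trunc_fn (f n) (K n) x - trunc_fn (f n) (L n) x)" if n: "1 \<le> n" for n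
  proof (cases "n = 1")
    case True
    show ?thesis
      unfolding True L_def g1 by (simp add: trunc_fn_one)
  next
    case False
    then obtain m where "n = Suc m" "1 \<le> m"
      using n by (cases n) auto
    then show ?thesis
      using gS by (simp add: L_def)
  qed
  have "weak_Lp_norm M p (\<lambda>x. \<Sum>n\<in>{1..k}. g n x) \<le> ennreal (4 powr (1 / p))" for k
  proof (rule weak_Lp_norm_le_powr_of_emeasure_le)
    fix c :: real
    assume "0 < c"
    then show "emeasure M {x\<in>space M. c < \<bar>\<Sum>n\<in>{1..k}. g n x\<bar>} \<le> ennreal (4 * (1 / c) powr p)"
      using emeasure_sum_trunc_fn_diff_gt_le[of p c f M K L k] p meas ball disj K_gt_1 K_double L
      by (simp add: g_eq L_def)
  qed (use p in auto)
  moreover have "ennreal (4 powr (1 / p)) \<le> 4"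
    using p powr_mono[of "1 / p" 1 4] ennreal_leI[of "4 powr (1 / p)" 4] by simp
  ultimately show ?thesis
    by (meson SUP_least order_trans)
qed

end
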